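(* Let $\mu,\nu$ be weights on $\mathbb{R}^n$, $K$ a locally integrable function on $\mathbb{R}^n$, and $W,E\subset\mathbb{R}^n$ measurable sets. Then $$\left|\int_W\mu(x)\int_E\nu(y)K(y-x)\,dy\,dx\right|\le\int_0^{|W|}\mu^*(s)\int_0^{|E|}\nu^*(t)\,K^{**}(\max(t,s))\,dt\,ds .$$
   Context: A weight is a nonnegative locally integrable function. $\psi^*$ is the decreasing rearrangement of $\psi$, and $\psi^{**}(t)=\frac1t\int_0^t\psi^*(s)\,ds$ $(t>0)$. *)

theory Defs
  imports "HOL-Analysis.Analysis"
begin

definition locally_integrable :: "('a::euclidean_space \<Rightarrow> real) \<Rightarrow> bool" where
  "locally_integrable f \<longleftrightarrow> (\<forall>C. compact C \<longrightarrow> set_integrable lebesgue C f)"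

definition weight :: "('a::euclidean_space \<Rightarrow> real) \<Rightarrow> bool" where
  "weight w \<longleftrightarrow> (\<forall>x. 0 \<le> w x) \<and> locally_integrable w"

text \<open>Decreasing rearrangement psi*(t) = inf of lambda with |{|psi| > lambda}| <= t
  (extended-real valued, since it may be infinite).\<close>
definition decr_rearr :: "('a::euclidean_space \<Rightarrow> real) \<Rightarrow> real \<Rightarrow> ennreal" where
  "decr_rearr \<psi> t = Inf {c::ennreal. emeasure lebesgue {x. c < ennreal \<bar>\<psi> x\<bar>} \<le> ennreal t}"

definition max_fn :: "('a::euclidean_space \<Rightarrow> real) \<Rightarrow> real \<Rightarrow> ennreal" where
  "max_fn \<psi> t = ennreal (1 / t) * (\<integral>\<^sup>+ s\<in>{0<..<t}. decr_rearr \<psi> s \<partial>lborel)"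

end

theory Submission
  imports Defs
begin

text \<open>
  Replace K by |K| and write f = 1_W mu, g = 1_E nu. The layer-cake formula in both weights turns
  the left-hand side into an integral over levels a, b > 0 of
  G(A, B) = int_A int_B |K(y - x)| dy dx for the superlevel sets A = {f > a}, B = {g > b}.
  By the Hardy--Littlewood inequality the inner integral over B is at most
  int_0^|B| K* = |B| K**(|B|), and symmetrically, so G(A, B) <= |A| |B| K**(max |A| |B|);
  since K** decreases, this is at most int_0^|A| int_0^|B| K**(max t s) dt ds.
  Integrating over the levels and exchanging the order of integration, the point s acquires the
  weight |{a > 0. |{f > a}| > s}|, which is at most mu*(s) and vanishes for s >= |W|;
  likewise for t.
\<close>

lemma emeasure_lborel_Ioi_infinite: "emeasure lborel {0::real<..} = \<infinity>"
proof -
  have "of_nat n \<le> emeasure lborel {0::real<..}" for n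
  proof -
    have "of_nat n = emeasure lborel {0<..<real n}"
      by (simp add: ennreal_of_nat_eq_real_of_nat)
    also have "\<dots> \<le> emeasure lborel {0::real<..}"
      by (rule emeasure_mono) auto
    finally show ?thesis .
  qed
  then have "(SUP n. of_nat n) \<le> emeasure lborel {0::real<..}"
    by (rule SUP_least)
  then show ?thesis
    by (simp add: ennreal_SUP_of_nat_eq_top top_unique)
qed

lemma emeasure_lborel_below_ennreal: "emeasure lborel {r::real. 0 < r \<and> ennreal r < v} = v"
proof (cases "v = \<infinity>")
  case True
  then have "{r::real. 0 < r \<and> ennreal r < v} = {0<..}" by auto
  then show ?thesis using True emeasure_lborel_Ioi_infinite by simp
next
  case False
  then obtain w where w: "v = ennreal w" "0 \<le> w" by (cases v) auto
  then have "{r::real. 0 < r \<and> ennreal r < v} = {0<..<w}"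
    by (auto simp: ennreal_less_iff)
  then show ?thesis using w by simp
qed

lemma ennreal_eq_nn_integral_levels:
  "v = (\<integral>\<^sup>+a. indicator {0<..} a * indicator {a::real. ennreal a < v} a \<partial>lborel)"
proof -
  have "(\<integral>\<^sup>+a. indicator {0<..} a * indicator {a::real. ennreal a < v} a \<partial>lborel)
      = (\<integral>\<^sup>+a. indicator {a::real. 0 < a \<and> ennreal a < v} a \<partial>lborel)"
    by (intro nn_integral_cong) (auto simp: indicator_def)
  also have "\<dots> = v" by (simp add: emeasure_lborel_below_ennreal)
  finally show ?thesis ..
qed

lemma nn_integral_layer_cake:
  fixes f g :: "'a \<Rightarrow> ennreal"
  assumes "sigma_finite_measure M" and [measurable]: "f \<in> borel_measurable M" "g \<in> borel_measurable M"
  shows "(\<integral>\<^sup>+x. f x * g x \<partial>M)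
    = (\<integral>\<^sup>+a. indicator {0<..} a * (\<integral>\<^sup>+x. indicator {x. ennreal a < f x} x * g x \<partial>M) \<partial>lborel)"
proof -
  interpret pair_sigma_finite M lborel
    using assms(1) by (simp add: pair_sigma_finite_def lborel.sigma_finite_measure_axioms)
  have "(\<integral>\<^sup>+x. f x * g x \<partial>M)
      = (\<integral>\<^sup>+x. \<integral>\<^sup>+a. indicator {0<..} a * indicator {a::real. ennreal a < f x} a * g x \<partial>lborel \<partial>M)"
    by (subst ennreal_eq_nn_integral_levels[of "f _"]) (simp add: nn_integral_multc)
  also have "\<dots> = (\<integral>\<^sup>+a. \<integral>\<^sup>+x. indicator {0<..} a * indicator {a::real. ennreal a < f x} a * g x \<partial>M \<partial>lborel)"
    by (rule Fubini'[symmetric]) measurable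
  also have "\<dots> = (\<integral>\<^sup>+a. indicator {0<..} a * (\<integral>\<^sup>+x. indicator {x. ennreal a < f x} x * g x \<partial>M) \<partial>lborel)"
    by (intro nn_integral_cong) (simp add: nn_integral_cmult[symmetric] mult.assoc indicator_def)
  finally show ?thesis .
qed

lemma sigma_finite_lebesgue: "sigma_finite_measure (lebesgue :: 'a::euclidean_space measure)"
proof
  show "\<exists>A. countable A \<and> A \<subseteq> sets (lebesgue::'a measure) \<and> \<Union> A = space lebesgue
      \<and> (\<forall>a\<in>A. emeasure lebesgue a \<noteq> \<infinity>)"
  proof (intro exI conjI)
    show "\<Union> (range (\<lambda>n::nat. cball (0::'a) (real n))) = space lebesgue"
      by (auto simp: dist_norm intro: real_arch_simple)
    show "\<forall>a\<in>range (\<lambda>n::nat. cball (0::'a) (real n)). emeasure lebesgue a \<noteq> \<infinity>"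
      using emeasure_lborel_cball_finite[of "0::'a"] by (simp add: less_imp_neq)
  qed auto
qed

interpretation lebesgue: sigma_finite_measure "lebesgue :: 'a::euclidean_space measure"
  by (rule sigma_finite_lebesgue)

interpretation lebesgue_pair: pair_sigma_finite "lebesgue :: 'a::euclidean_space measure" lebesgue ..

interpretation lebesgue_lborel: pair_sigma_finite "lebesgue :: 'a::euclidean_space measure" lborel ..

lemma sets_lebesgue_Collect: "Measurable.pred lebesgue P \<Longrightarrow> {x. P x} \<in> sets lebesgue"
  unfolding pred_def by simp

lemma nn_integral_layer_cake_emeasure:
  fixes f :: "'a::euclidean_space \<Rightarrow> ennreal"
  assumes [measurable]: "f \<in> borel_measurable lebesgue"
  shows "(\<integral>\<^sup>+x. f x \<partial>lebesgue) = (\<integral>\<^sup>+a. indicator {0<..} a * emeasure lebesgue {x. ennreal a < f x} \<partial>lborel)"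
proof -
  have "{x. ennreal a < f x} \<in> sets lebesgue" for a :: real
    by (rule sets_lebesgue_Collect) measurable
  then show ?thesis
    using nn_integral_layer_cake[OF lebesgue.sigma_finite_measure_axioms assms, of "\<lambda>_. 1"] by simp
qed

lemma borel_measurable_antimono_ennreal:
  fixes g :: "real \<Rightarrow> ennreal"
  assumes "antimono g"
  shows "g \<in> borel_measurable borel"
proof (rule borel_measurableI_greater)
  fix y
  define D where "D = {x. y < g x}"
  have down: "x \<in> D" if "x' \<in> D" "x \<le> x'" for x x'
    using that antimonoD[OF assms, of x x'] unfolding D_def by (auto intro: less_le_trans)
  have "D \<in> sets borel"
  proof (cases "D = UNIV \<or> D = {}")
    case True then show ?thesis by auto
  next
    case False
    then obtain z a where z: "z \<notin> D" and a: "a \<in> D" by auto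
    have "x \<le> z" if "x \<in> D" for x
      using down[OF that, of z] z by (cases "x \<le> z") auto
    then have bdd: "bdd_above D" by (auto simp: bdd_above_def)
    define m where "m = Sup D"
    have "D = {..<m} \<union> (if m \<in> D then {m} else {})"
    proof (intro set_eqI iffI)
      fix x assume x: "x \<in> D"
      then have "x \<le> m" unfolding m_def using bdd by (rule cSup_upper)
      then show "x \<in> {..<m} \<union> (if m \<in> D then {m} else {})"
        using x by (cases "x = m") auto
    next
      fix x assume x: "x \<in> {..<m} \<union> (if m \<in> D then {m} else {})"
      show "x \<in> D"
      proof (cases "x < m")
        case True
        then obtain d where "d \<in> D" "x < d"
          using less_cSup_iff[of D x] a bdd unfolding m_def by auto
        then show ?thesis using down by auto
      next
        case False then show ?thesis using x by (auto split: if_splits)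
      qed
    qed
    also have "\<dots> \<in> sets borel" by auto
    finally show ?thesis .
  qed
  then show "{x \<in> space borel. y < g x} \<in> sets borel" unfolding D_def by simp
qed

lemma lebesgue_id_borel[measurable]: "(\<lambda>x::'a::euclidean_space. x) \<in> lebesgue \<rightarrow>\<^sub>M borel"
  by (rule measurable_completion) (simp add: measurable_ident_sets)

lemma lebesgue_affine_measurable_scaleR[measurable]:
  fixes d :: "'a::euclidean_space"
  shows "(\<lambda>z. \<sigma> *\<^sub>R z + d) \<in> lebesgue \<rightarrow>\<^sub>M lebesgue"
proof (cases "\<sigma> = 0")
  case True then show ?thesis by simp
next
  case False
  have "(\<lambda>x. d + (\<Sum>j\<in>Basis. (\<sigma> * (x \<bullet> j)) *\<^sub>R j)) = (\<lambda>z. \<sigma> *\<^sub>R z + d)"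
    unfolding scaleR_scaleR[symmetric] scaleR_sum_right[symmetric]
    by (auto simp add: euclidean_representation ac_simps)
  then show ?thesis using lebesgue_affine_measurable[of "\<lambda>_. \<sigma>" d] False by simp
qed

lemma borel_measurable_diff_pair_lebesgue[measurable]:
  "(\<lambda>p::'a::euclidean_space \<times> 'a. snd p - fst p) \<in> (lebesgue \<Otimes>\<^sub>M lebesgue) \<rightarrow>\<^sub>M borel"
proof -
  have "snd \<in> (lebesgue \<Otimes>\<^sub>M lebesgue) \<rightarrow>\<^sub>M (borel::'a measure)"
    using measurable_compose[OF measurable_snd lebesgue_id_borel] by (simp add: comp_def)
  moreover have "fst \<in> (lebesgue \<Otimes>\<^sub>M lebesgue) \<rightarrow>\<^sub>M (borel::'a measure)"
    using measurable_compose[OF measurable_fst lebesgue_id_borel] by (simp add: comp_def)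
  ultimately show ?thesis by measurable
qed

subsection \<open>Decreasing rearrangement\<close>

lemma decr_rearr_antimono: "antimono (decr_rearr \<psi>)"
proof (rule antimonoI)
  fix s t :: real assume "s \<le> t"
  then have "{c. emeasure lebesgue {x. c < ennreal \<bar>\<psi> x\<bar>} \<le> ennreal s}
      \<subseteq> {c. emeasure lebesgue {x. c < ennreal \<bar>\<psi> x\<bar>} \<le> ennreal t}"
    by (auto intro: order_trans ennreal_leI)
  then show "decr_rearr \<psi> t \<le> decr_rearr \<psi> s"
    unfolding decr_rearr_def by (rule Inf_superset_mono)
qed

lemma borel_measurable_decr_rearr[measurable]: "decr_rearr \<psi> \<in> borel_measurable borel"
  by (rule borel_measurable_antimono_ennreal) (rule decr_rearr_antimono)

lemma decr_rearr_cong_AE: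
  fixes K K' :: "'a::euclidean_space \<Rightarrow> real"
  assumes "AE z in lborel. K z = K' z"
    and [measurable]: "K \<in> borel_measurable lebesgue" "K' \<in> borel_measurable lebesgue"
  shows "decr_rearr K = decr_rearr K'"
proof -
  have "emeasure lebesgue {x. c < ennreal \<bar>K x\<bar>} = emeasure lebesgue {x. c < ennreal \<bar>K' x\<bar>}" for c
  proof (rule emeasure_eq_AE)
    show "AE x in lebesgue. x \<in> {x. c < ennreal \<bar>K x\<bar>} \<longleftrightarrow> x \<in> {x. c < ennreal \<bar>K' x\<bar>}"
      using AE_completion[OF assms(1)] by eventually_elim auto
    show "{x. c < ennreal \<bar>K x\<bar>} \<in> sets lebesgue" "{x. c < ennreal \<bar>K' x\<bar>} \<in> sets lebesgue"
      by (rule sets_lebesgue_Collect, measurable)+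
  qed
  then show ?thesis unfolding decr_rearr_def[abs_def] by simp
qed

lemma emeasure_superlevel_eq_SUP:
  fixes \<psi> :: "'a::euclidean_space \<Rightarrow> real"
  assumes [measurable]: "\<psi> \<in> borel_measurable lebesgue" and "0 \<le> c"
  shows "emeasure lebesgue {x. ennreal c < ennreal \<bar>\<psi> x\<bar>}
    = (SUP n. emeasure lebesgue {x. ennreal (c + 1 / Suc n) < ennreal \<bar>\<psi> x\<bar>})"
proof -
  define C where "C n = {x. ennreal (c + 1 / Suc n) < ennreal \<bar>\<psi> x\<bar>}" for n :: nat
  have C_sets: "C n \<in> sets lebesgue" for n
    unfolding C_def by (rule sets_lebesgue_Collect) measurable
  have "incseq C"
    unfolding C_def incseq_def
    by (auto elim!: le_less_trans[rotated] intro!: ennreal_leI simp: frac_le)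
  have union: "(\<Union>n. C n) = {x. ennreal c < ennreal \<bar>\<psi> x\<bar>}"
  proof (intro set_eqI iffI)
    fix x assume "x \<in> (\<Union>n. C n)"
    then show "x \<in> {x. ennreal c < ennreal \<bar>\<psi> x\<bar>}"
      unfolding C_def by (auto elim!: le_less_trans[rotated] intro!: ennreal_leI)
  next
    fix x assume "x \<in> {x. ennreal c < ennreal \<bar>\<psi> x\<bar>}"
    then have "c < \<bar>\<psi> x\<bar>" using \<open>0 \<le> c\<close> by (simp add: ennreal_less_iff)
    then obtain n where "1 / Suc n < \<bar>\<psi> x\<bar> - c"
      by (metis diff_gt_0_iff_gt nat_approx_posE)
    then have "ennreal (c + 1 / Suc n) < ennreal \<bar>\<psi> x\<bar>"
      using \<open>0 \<le> c\<close> by (subst ennreal_less_iff) auto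
    then show "x \<in> (\<Union>n. C n)" unfolding C_def by auto
  qed
  have "(SUP n. emeasure lebesgue (C n)) = emeasure lebesgue (\<Union>n. C n)"
    using C_sets \<open>incseq C\<close> by (intro SUP_emeasure_incseq) auto
  then show ?thesis
    unfolding union unfolding C_def by (rule sym)
qed

lemma less_decr_rearr:
  fixes \<psi> :: "'a::euclidean_space \<Rightarrow> real"
  assumes [measurable]: "\<psi> \<in> borel_measurable lebesgue"
    and "0 \<le> c" and "ennreal r < emeasure lebesgue {x. ennreal c < ennreal \<bar>\<psi> x\<bar>}"
  shows "ennreal c < decr_rearr \<psi> r"
proof -
  have "ennreal r < (SUP n. emeasure lebesgue {x. ennreal (c + 1 / Suc n) < ennreal \<bar>\<psi> x\<bar>})"
    using assms(3) unfolding emeasure_superlevel_eq_SUP[OF assms(1,2)] .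
  then obtain n where n: "ennreal r < emeasure lebesgue {x. ennreal (c + 1 / Suc n) < ennreal \<bar>\<psi> x\<bar>}"
    unfolding less_SUP_iff by blast
  have "ennreal (c + 1 / Suc n) \<le> decr_rearr \<psi> r"
    unfolding decr_rearr_def
  proof (rule Inf_greatest)
    fix c' assume c': "c' \<in> {c. emeasure lebesgue {x. c < ennreal \<bar>\<psi> x\<bar>} \<le> ennreal r}"
    show "ennreal (c + 1 / Suc n) \<le> c'"
    proof (rule ccontr)
      assume "\<not> ennreal (c + 1 / Suc n) \<le> c'"
      then have "{x. ennreal (c + 1 / Suc n) < ennreal \<bar>\<psi> x\<bar>} \<subseteq> {x. c' < ennreal \<bar>\<psi> x\<bar>}"
        by (auto simp: not_le intro: less_trans)
      then have "emeasure lebesgue {x. ennreal (c + 1 / Suc n) < ennreal \<bar>\<psi> x\<bar>}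
          \<le> emeasure lebesgue {x. c' < ennreal \<bar>\<psi> x\<bar>}"
        by (intro emeasure_mono sets_lebesgue_Collect) measurable
      also have "\<dots> \<le> ennreal r"
        using c' by simp
      finally show False
        using n leD by blast
    qed
  qed
  moreover have "ennreal c < ennreal (c + 1 / Suc n)"
    using \<open>0 \<le> c\<close> by (auto simp: ennreal_less_iff)
  ultimately show ?thesis by (rule less_le_trans[rotated])
qed

lemma emeasure_superlevel_affine:
  fixes \<psi> :: "'a::euclidean_space \<Rightarrow> real"
  assumes [measurable]: "\<psi> \<in> borel_measurable lebesgue" and "\<bar>\<sigma>\<bar> = 1"
  shows "emeasure lebesgue {z. c < ennreal \<bar>\<psi> (\<sigma> *\<^sub>R z + d)\<bar>} = emeasure lebesgue {w. c < ennreal \<bar>\<psi> w\<bar>}"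
proof -
  have sq: "\<sigma> * \<sigma> = 1"
    using assms(2) by (metis abs_mult_self_eq mult_1)
  have "{z. c < ennreal \<bar>\<psi> (\<sigma> *\<^sub>R z + d)\<bar>} = (\<lambda>w. \<sigma> *\<^sub>R w + (- (\<sigma> *\<^sub>R d))) ` {w. c < ennreal \<bar>\<psi> w\<bar>}"
  proof (intro set_eqI iffI)
    fix z assume "z \<in> {z. c < ennreal \<bar>\<psi> (\<sigma> *\<^sub>R z + d)\<bar>}"
    then show "z \<in> (\<lambda>w. \<sigma> *\<^sub>R w + (- (\<sigma> *\<^sub>R d))) ` {w. c < ennreal \<bar>\<psi> w\<bar>}"
      by (intro image_eqI[where x="\<sigma> *\<^sub>R z + d"]) (auto simp: sq scaleR_add_right)
  qed (auto simp: sq scaleR_add_right scaleR_diff_right)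
  then show ?thesis
    using emeasure_lebesgue_affine[of \<sigma> "- (\<sigma> *\<^sub>R d)" "{w. c < ennreal \<bar>\<psi> w\<bar>}"] assms(2) by simp
qed

lemma emeasure_superlevel_affine_le_decr_rearr:
  fixes \<psi> :: "'a::euclidean_space \<Rightarrow> real"
  assumes [measurable]: "\<psi> \<in> borel_measurable lebesgue" "S \<in> sets lebesgue" and "\<bar>\<sigma>\<bar> = 1" "0 < c"
  shows "emeasure lebesgue {z. ennreal c < indicator S z * ennreal \<bar>\<psi> (\<sigma> *\<^sub>R z + d)\<bar>}
    \<le> emeasure lborel {r. ennreal c < indicator {r. 0 < r \<and> ennreal r < emeasure lebesgue S} r * decr_rearr \<psi> r}"
proof -
  let ?L = "emeasure lebesgue S" and ?D = "emeasure lebesgue {w. ennreal c < ennreal \<bar>\<psi> w\<bar>}"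
  let ?T = "{z. ennreal c < ennreal \<bar>\<psi> (\<sigma> *\<^sub>R z + d)\<bar>}"
  have [measurable]: "?T \<in> sets lebesgue"
    by (rule sets_lebesgue_Collect) measurable
  have "{z. ennreal c < indicator S z * ennreal \<bar>\<psi> (\<sigma> *\<^sub>R z + d)\<bar>} = S \<inter> ?T"
    using \<open>0 < c\<close> by (auto simp: indicator_def)
  then have "emeasure lebesgue {z. ennreal c < indicator S z * ennreal \<bar>\<psi> (\<sigma> *\<^sub>R z + d)\<bar>}
      = emeasure lebesgue (S \<inter> ?T)"
    by simp
  also have "\<dots> \<le> min ?L ?D"
  proof (rule min.boundedI)
    show "emeasure lebesgue (S \<inter> ?T) \<le> ?L"
      using assms(2) by (intro emeasure_mono) auto
    have "emeasure lebesgue (S \<inter> ?T) \<le> emeasure lebesgue ?T"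
      by (intro emeasure_mono) auto
    then show "emeasure lebesgue (S \<inter> ?T) \<le> ?D"
      using emeasure_superlevel_affine[OF assms(1,3), of "ennreal c" d] by simp
  qed
  also have "\<dots> = emeasure lborel {r. 0 < r \<and> ennreal r < min ?L ?D}"
    by (rule emeasure_lborel_below_ennreal[symmetric])
  also have "\<dots> \<le> emeasure lborel {r. ennreal c < indicator {r. 0 < r \<and> ennreal r < ?L} r * decr_rearr \<psi> r}"
    using less_decr_rearr[OF assms(1), of c] \<open>0 < c\<close>
    by (intro emeasure_mono) (auto simp: pred_def[symmetric])
  finally show ?thesis .
qed

text \<open>The Hardy--Littlewood inequality, for the affine maps that preserve Lebesgue measure.\<close>

lemma nn_integral_affine_le_decr_rearr:
  fixes \<psi> :: "'a::euclidean_space \<Rightarrow> real"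
  assumes [measurable]: "\<psi> \<in> borel_measurable lebesgue" "S \<in> sets lebesgue" and "\<bar>\<sigma>\<bar> = 1"
  shows "(\<integral>\<^sup>+z. indicator S z * ennreal \<bar>\<psi> (\<sigma> *\<^sub>R z + d)\<bar> \<partial>lebesgue)
     \<le> (\<integral>\<^sup>+r. indicator {r. 0 < r \<and> ennreal r < emeasure lebesgue S} r * decr_rearr \<psi> r \<partial>lborel)"
proof -
  let ?R = "\<lambda>r. indicator {r. 0 < r \<and> ennreal r < emeasure lebesgue S} r * decr_rearr \<psi> r"
  have "(\<integral>\<^sup>+z. indicator S z * ennreal \<bar>\<psi> (\<sigma> *\<^sub>R z + d)\<bar> \<partial>lebesgue)
      = (\<integral>\<^sup>+c. indicator {0<..} c *
           emeasure lebesgue {z. ennreal c < indicator S z * ennreal \<bar>\<psi> (\<sigma> *\<^sub>R z + d)\<bar>} \<partial>lborel)"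
    by (rule nn_integral_layer_cake_emeasure) measurable
  also have "\<dots> \<le> (\<integral>\<^sup>+c. indicator {0<..} c * emeasure lborel {r. ennreal c < ?R r} \<partial>lborel)"
    using emeasure_superlevel_affine_le_decr_rearr[OF assms]
    by (intro nn_integral_mono) (auto split: split_indicator)
  also have "\<dots> = (\<integral>\<^sup>+r. ?R r \<partial>lborel)"
    using nn_integral_layer_cake[OF lborel.sigma_finite_measure_axioms, of ?R "\<lambda>_. 1"]
    by (simp add: pred_def[symmetric])
  finally show ?thesis .
qed

subsection \<open>The maximal function\<close>

lemma max_fn_nonpos: "r \<le> 0 \<Longrightarrow> max_fn \<psi> r = 0"
  unfolding max_fn_def by (simp add: ennreal_neg)

lemma ennreal_mult_max_fn:
  assumes "0 < r"
  shows "ennreal r * max_fn \<psi> r = (\<integral>\<^sup>+s. indicator {s. 0 < s \<and> ennreal s < ennreal r} s * decr_rearr \<psi> s \<partial>lborel)"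
proof -
  have "ennreal r * max_fn \<psi> r = (\<integral>\<^sup>+ s\<in>{0<..<r}. decr_rearr \<psi> s \<partial>lborel)"
    unfolding max_fn_def using assms
    by (simp add: mult.assoc[symmetric] ennreal_mult'[symmetric] del: ennreal_1) simp
  also have "\<dots> = (\<integral>\<^sup>+s. indicator {s. 0 < s \<and> ennreal s < ennreal r} s * decr_rearr \<psi> s \<partial>lborel)"
    using assms by (intro nn_integral_cong) (auto simp: indicator_def ennreal_less_iff)
  finally show ?thesis .
qed

lemma max_fn_rescaled:
  assumes "0 < r"
  shows "max_fn \<psi> r = (\<integral>\<^sup>+u. indicator {0<..<1} u * decr_rearr \<psi> (r * u) \<partial>lborel)"
proof -
  have "(\<integral>\<^sup>+ s\<in>{0<..<r}. decr_rearr \<psi> s \<partial>lborel)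
      = ennreal \<bar>r\<bar> * (\<integral>\<^sup>+u. decr_rearr \<psi> (0 + r * u) * indicator {0<..<r} (0 + r * u) \<partial>lborel)"
    using assms by (intro nn_integral_real_affine) auto
  also have "(\<integral>\<^sup>+u. decr_rearr \<psi> (0 + r * u) * indicator {0<..<r} (0 + r * u) \<partial>lborel)
      = (\<integral>\<^sup>+u. indicator {0<..<1} u * decr_rearr \<psi> (r * u) \<partial>lborel)"
    using assms by (intro nn_integral_cong) (auto simp: indicator_def zero_less_mult_iff)
  finally show ?thesis
    unfolding max_fn_def using assms
    by (simp add: mult.assoc[symmetric] ennreal_mult'[symmetric] del: ennreal_1) simp
qed

lemma max_fn_antimono:
  assumes "0 < r" "r \<le> r'"
  shows "max_fn \<psi> r' \<le> max_fn \<psi> r"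
proof -
  have "decr_rearr \<psi> (r' * u) \<le> decr_rearr \<psi> (r * u)" if "0 < u" for u
    using that assms by (intro antimonoD[OF decr_rearr_antimono]) simp
  then show ?thesis
    using assms by (auto simp: max_fn_rescaled intro!: nn_integral_mono split: split_indicator)
qed

lemma borel_measurable_max_fn[measurable]: "max_fn \<psi> \<in> borel_measurable borel"
proof -
  have "max_fn \<psi> = (\<lambda>r. indicator {0<..} r * (\<integral>\<^sup>+u. indicator {0<..<1} u * decr_rearr \<psi> (r * u) \<partial>lborel))"
    by (auto simp: fun_eq_iff max_fn_rescaled max_fn_nonpos not_less split: split_indicator)
  then show ?thesis by simp
qed

subsection \<open>Kernel integrals over pairs of sets\<close>

definition cross_integral :: "('a::euclidean_space \<Rightarrow> real) \<Rightarrow> 'a set \<Rightarrow> 'a set \<Rightarrow> ennreal" where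
  "cross_integral \<psi> A B =
     (\<integral>\<^sup>+x. indicator A x * (\<integral>\<^sup>+y. indicator B y * ennreal \<bar>\<psi> (y - x)\<bar> \<partial>lebesgue) \<partial>lebesgue)"

lemma cross_integral_eq_pair:
  fixes \<psi> :: "'a::euclidean_space \<Rightarrow> real"
  assumes [measurable]: "\<psi> \<in> borel_measurable borel" "A \<in> sets lebesgue" "B \<in> sets lebesgue"
  shows "cross_integral \<psi> A B = (\<integral>\<^sup>+p. indicator A (fst p) * indicator B (snd p) *
           ennreal \<bar>\<psi> (snd p - fst p)\<bar> \<partial>(lebesgue \<Otimes>\<^sub>M lebesgue))"
proof -
  have "cross_integral \<psi> A B
      = (\<integral>\<^sup>+x. \<integral>\<^sup>+y. indicator A x * indicator B y * ennreal \<bar>\<psi> (y - x)\<bar> \<partial>lebesgue \<partial>lebesgue)"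
    unfolding cross_integral_def by (intro nn_integral_cong) (simp add: mult.assoc nn_integral_cmult)
  also have "\<dots> = (\<integral>\<^sup>+p. indicator A (fst p) * indicator B (snd p) *
           ennreal \<bar>\<psi> (snd p - fst p)\<bar> \<partial>(lebesgue \<Otimes>\<^sub>M lebesgue))"
    using lebesgue.nn_integral_fst[of "\<lambda>p. indicator A (fst p) * indicator B (snd p) * ennreal \<bar>\<psi> (snd p - fst p)\<bar>"]
    by simp
  finally show ?thesis .
qed

lemma cross_integral_swap:
  fixes \<psi> :: "'a::euclidean_space \<Rightarrow> real"
  assumes [measurable]: "\<psi> \<in> borel_measurable borel" "A \<in> sets lebesgue" "B \<in> sets lebesgue"
  shows "cross_integral \<psi> A B
    = (\<integral>\<^sup>+y. indicator B y * (\<integral>\<^sup>+x. indicator A x * ennreal \<bar>\<psi> (y - x)\<bar> \<partial>lebesgue) \<partial>lebesgue)"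
proof -
  have "cross_integral \<psi> A B
      = (\<integral>\<^sup>+x. \<integral>\<^sup>+y. indicator A x * indicator B y * ennreal \<bar>\<psi> (y - x)\<bar> \<partial>lebesgue \<partial>lebesgue)"
    unfolding cross_integral_def by (intro nn_integral_cong) (simp add: mult.assoc nn_integral_cmult)
  also have "\<dots> = (\<integral>\<^sup>+y. \<integral>\<^sup>+x. indicator A x * indicator B y * ennreal \<bar>\<psi> (y - x)\<bar> \<partial>lebesgue \<partial>lebesgue)"
    by (rule lebesgue_pair.Fubini'[symmetric]) measurable
  also have "\<dots> = (\<integral>\<^sup>+y. indicator B y * (\<integral>\<^sup>+x. indicator A x * ennreal \<bar>\<psi> (y - x)\<bar> \<partial>lebesgue) \<partial>lebesgue)"
    by (intro nn_integral_cong) (simp add: nn_integral_cmult[symmetric] mult_ac)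
  finally show ?thesis .
qed

lemma cross_integral_le_left:
  fixes \<psi> :: "'a::euclidean_space \<Rightarrow> real"
  assumes [measurable]: "\<psi> \<in> borel_measurable borel" "A \<in> sets lebesgue" "B \<in> sets lebesgue"
  shows "cross_integral \<psi> A B \<le> emeasure lebesgue A *
    (\<integral>\<^sup>+r. indicator {r. 0 < r \<and> ennreal r < emeasure lebesgue B} r * decr_rearr \<psi> r \<partial>lborel)"
proof -
  let ?H = "\<integral>\<^sup>+r. indicator {r. 0 < r \<and> ennreal r < emeasure lebesgue B} r * decr_rearr \<psi> r \<partial>lborel"
  have "(\<integral>\<^sup>+y. indicator B y * ennreal \<bar>\<psi> (1 *\<^sub>R y + - x)\<bar> \<partial>lebesgue) \<le> ?H" for x
    by (rule nn_integral_affine_le_decr_rearr) measurable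
  then have "cross_integral \<psi> A B \<le> (\<integral>\<^sup>+x. indicator A x * ?H \<partial>lebesgue)"
    unfolding cross_integral_def by (intro nn_integral_mono mult_left_mono) simp_all
  also have "\<dots> = emeasure lebesgue A * ?H"
    by (simp add: nn_integral_multc)
  finally show ?thesis .
qed

lemma cross_integral_le_right:
  fixes \<psi> :: "'a::euclidean_space \<Rightarrow> real"
  assumes [measurable]: "\<psi> \<in> borel_measurable borel" "A \<in> sets lebesgue" "B \<in> sets lebesgue"
  shows "cross_integral \<psi> A B \<le> emeasure lebesgue B *
    (\<integral>\<^sup>+r. indicator {r. 0 < r \<and> ennreal r < emeasure lebesgue A} r * decr_rearr \<psi> r \<partial>lborel)"
proof -
  let ?H = "\<integral>\<^sup>+r. indicator {r. 0 < r \<and> ennreal r < emeasure lebesgue A} r * decr_rearr \<psi> r \<partial>lborel"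
  have "(\<integral>\<^sup>+x. indicator A x * ennreal \<bar>\<psi> ((- 1) *\<^sub>R x + y)\<bar> \<partial>lebesgue) \<le> ?H" for y
    by (rule nn_integral_affine_le_decr_rearr) measurable
  then have "cross_integral \<psi> A B \<le> (\<integral>\<^sup>+y. indicator B y * ?H \<partial>lebesgue)"
    unfolding cross_integral_swap[OF assms] by (intro nn_integral_mono mult_left_mono) simp_all
  also have "\<dots> = emeasure lebesgue B * ?H"
    by (simp add: nn_integral_multc)
  finally show ?thesis .
qed

lemma cross_integral_eq_SUP_cball:
  fixes \<psi> :: "'a::euclidean_space \<Rightarrow> real"
  assumes [measurable]: "\<psi> \<in> borel_measurable borel" "A \<in> sets lebesgue" "B \<in> sets lebesgue"
  shows "cross_integral \<psi> A B = (SUP n. cross_integral \<psi> (A \<inter> cball 0 (real n)) (B \<inter> cball 0 (real n)))"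
proof -
  have [measurable]: "A \<inter> cball 0 (real n) \<in> sets lebesgue" "B \<inter> cball 0 (real n) \<in> sets lebesgue" for n
    by auto
  define F where "F n p = indicator (A \<inter> cball 0 (real n)) (fst p) *
    indicator (B \<inter> cball 0 (real n)) (snd p) * ennreal \<bar>\<psi> (snd p - fst p)\<bar>" for n and p :: "'a \<times> 'a"
  have [measurable]: "F n \<in> borel_measurable (lebesgue \<Otimes>\<^sub>M lebesgue)" for n
    unfolding F_def by measurable
  have "incseq F"
    unfolding incseq_def le_fun_def F_def
    by (auto intro!: mult_right_mono simp: indicator_def)
  have SUP_F: "(SUP n. F n p) = indicator A (fst p) * indicator B (snd p) * ennreal \<bar>\<psi> (snd p - fst p)\<bar>" for p
  proof -
    define c :: "nat \<Rightarrow> ennreal"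
      where "c n = indicator (cball 0 (real n)) (fst p) * indicator (cball 0 (real n)) (snd p)" for n
    have "F n p = c n * (indicator A (fst p) * indicator B (snd p) * ennreal \<bar>\<psi> (snd p - fst p)\<bar>)" for n
      unfolding F_def c_def by (simp add: indicator_inter_arith mult_ac)
    moreover obtain N :: nat where N: "max (norm (fst p)) (norm (snd p)) \<le> real N"
      using real_arch_simple by blast
    then have "(SUP n. c n) = 1"
      by (intro antisym SUP_least SUP_upper2[of N]) (auto simp: c_def indicator_def)
    ultimately show ?thesis by (simp add: SUP_mult_right_ennreal[symmetric])
  qed
  have "cross_integral \<psi> A B = (\<integral>\<^sup>+p. (SUP n. F n p) \<partial>(lebesgue \<Otimes>\<^sub>M lebesgue))"
    unfolding SUP_F by (rule cross_integral_eq_pair) measurable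
  also have "\<dots> = (SUP n. \<integral>\<^sup>+p. F n p \<partial>(lebesgue \<Otimes>\<^sub>M lebesgue))"
    by (rule nn_integral_monotone_convergence_SUP) (use \<open>incseq F\<close> in measurable)
  also have "\<dots> = (SUP n. cross_integral \<psi> (A \<inter> cball 0 (real n)) (B \<inter> cball 0 (real n)))"
    unfolding F_def by (subst cross_integral_eq_pair) measurable
  finally show ?thesis .
qed

text \<open>The right-hand side of the theorem for weights \<open>1\<close> on sets of measure \<open>\<alpha>\<close> and \<open>\<beta>\<close>.\<close>

definition rearr_bound :: "('a::euclidean_space \<Rightarrow> real) \<Rightarrow> ennreal \<Rightarrow> ennreal \<Rightarrow> ennreal" where
  "rearr_bound \<psi> \<alpha> \<beta> = (\<integral>\<^sup>+s. indicator {s. 0 < s \<and> ennreal s < \<alpha>} s *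
      (\<integral>\<^sup>+t. indicator {t. 0 < t \<and> ennreal t < \<beta>} t * max_fn \<psi> (max t s) \<partial>lborel) \<partial>lborel)"

lemma rearr_bound_mono: "\<alpha> \<le> \<alpha>' \<Longrightarrow> \<beta> \<le> \<beta>' \<Longrightarrow> rearr_bound \<psi> \<alpha> \<beta> \<le> rearr_bound \<psi> \<alpha>' \<beta>'"
  unfolding rearr_bound_def
  by (intro nn_integral_mono mult_mono) (auto simp: indicator_def intro: less_le_trans)

lemma mult_max_fn_le_rearr_bound:
  assumes "0 < m" "a \<le> m" "b \<le> m" "0 \<le> a" "0 \<le> b"
  shows "ennreal a * ennreal b * max_fn \<psi> m \<le> rearr_bound \<psi> (ennreal a) (ennreal b)"
proof -
  have "ennreal a * ennreal b * max_fn \<psi> m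
      = (\<integral>\<^sup>+s. indicator {s. 0 < s \<and> ennreal s < ennreal a} s *
          (\<integral>\<^sup>+t. indicator {t. 0 < t \<and> ennreal t < ennreal b} t * max_fn \<psi> m \<partial>lborel) \<partial>lborel)"
    by (simp add: nn_integral_cmult_indicator nn_integral_multc emeasure_lborel_below_ennreal mult.assoc
        del: ennreal_less_iff)
  also have "\<dots> \<le> rearr_bound \<psi> (ennreal a) (ennreal b)"
    unfolding rearr_bound_def using assms
    by (auto intro!: nn_integral_mono max_fn_antimono simp: ennreal_less_iff less_max_iff_disj
        split: split_indicator)
  finally show ?thesis .
qed

lemma cross_integral_le_rearr_bound_finite:
  fixes \<psi> :: "'a::euclidean_space \<Rightarrow> real"
  assumes [measurable]: "\<psi> \<in> borel_measurable borel" "A \<in> sets lebesgue" "B \<in> sets lebesgue"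
    and "emeasure lebesgue A \<noteq> \<infinity>" "emeasure lebesgue B \<noteq> \<infinity>"
  shows "cross_integral \<psi> A B \<le> rearr_bound \<psi> (emeasure lebesgue A) (emeasure lebesgue B)"
proof -
  obtain a where a: "emeasure lebesgue A = ennreal a" "0 \<le> a"
    using assms(4) by (cases "emeasure lebesgue A") auto
  obtain b where b: "emeasure lebesgue B = ennreal b" "0 \<le> b"
    using assms(5) by (cases "emeasure lebesgue B") auto
  note left = cross_integral_le_left[OF assms(1-3)] and right = cross_integral_le_right[OF assms(1-3)]
  consider "a = 0 \<or> b = 0" | "0 < b" "b \<le> a" | "0 < a" "a < b"
    using a b by linarith
  then show ?thesis
  proof cases
    case 1
    then have "cross_integral \<psi> A B = 0"
      using left right a b by auto
    then show ?thesis by simp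
  next
    case 2
    have "cross_integral \<psi> A B \<le> ennreal b * (ennreal a * max_fn \<psi> a)"
      using right a b 2 by (simp add: ennreal_mult_max_fn)
    also have "\<dots> = ennreal a * ennreal b * max_fn \<psi> a"
      by (simp add: mult_ac)
    also have "\<dots> \<le> rearr_bound \<psi> (ennreal a) (ennreal b)"
      using 2 b by (intro mult_max_fn_le_rearr_bound) auto
    finally show ?thesis using a b by simp
  next
    case 3
    have "cross_integral \<psi> A B \<le> ennreal a * (ennreal b * max_fn \<psi> b)"
      using left a b 3 by (simp add: ennreal_mult_max_fn)
    also have "\<dots> = ennreal a * ennreal b * max_fn \<psi> b"
      by (simp add: mult_ac)
    also have "\<dots> \<le> rearr_bound \<psi> (ennreal a) (ennreal b)"
      using 3 a by (intro mult_max_fn_le_rearr_bound) auto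
    finally show ?thesis using a b by simp
  qed
qed

lemma cross_integral_le_rearr_bound:
  fixes \<psi> :: "'a::euclidean_space \<Rightarrow> real"
  assumes [measurable]: "\<psi> \<in> borel_measurable borel" "A \<in> sets lebesgue" "B \<in> sets lebesgue"
  shows "cross_integral \<psi> A B \<le> rearr_bound \<psi> (emeasure lebesgue A) (emeasure lebesgue B)"
  unfolding cross_integral_eq_SUP_cball[OF assms]
proof (rule SUP_least)
  fix n :: nat
  have finite: "emeasure lebesgue (C \<inter> cball 0 (real n)) \<noteq> \<infinity>" for C :: "'a set"
  proof -
    have "emeasure lebesgue (C \<inter> cball 0 (real n)) \<le> emeasure lebesgue (cball (0::'a) (real n))"
      by (rule emeasure_mono) auto
    then show ?thesis
      using emeasure_lborel_cball_finite[of "0::'a" "real n"] by (auto simp: top_unique)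
  qed
  have "cross_integral \<psi> (A \<inter> cball 0 (real n)) (B \<inter> cball 0 (real n))
      \<le> rearr_bound \<psi> (emeasure lebesgue (A \<inter> cball 0 (real n))) (emeasure lebesgue (B \<inter> cball 0 (real n)))"
    using assms finite by (intro cross_integral_le_rearr_bound_finite) auto
  also have "\<dots> \<le> rearr_bound \<psi> (emeasure lebesgue A) (emeasure lebesgue B)"
    by (intro rearr_bound_mono emeasure_mono) auto
  finally show "cross_integral \<psi> (A \<inter> cball 0 (real n)) (B \<inter> cball 0 (real n))
      \<le> rearr_bound \<psi> (emeasure lebesgue A) (emeasure lebesgue B)" .
qed

subsection \<open>Integration over levels\<close>

definition pos_superlevel_measure :: "(real \<Rightarrow> ennreal) \<Rightarrow> real \<Rightarrow> ennreal" where
  "pos_superlevel_measure \<alpha> s = emeasure lborel {a. 0 < a \<and> ennreal s < \<alpha> a}"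

lemma borel_measurable_pos_superlevel_measure[measurable]:
  assumes [measurable]: "\<alpha> \<in> borel_measurable borel"
  shows "pos_superlevel_measure \<alpha> \<in> borel_measurable borel"
proof (rule borel_measurable_antimono_ennreal, rule antimonoI)
  fix s t :: real assume "s \<le> t"
  then show "pos_superlevel_measure \<alpha> t \<le> pos_superlevel_measure \<alpha> s"
    unfolding pos_superlevel_measure_def
    by (intro emeasure_mono) (auto intro: le_less_trans[OF ennreal_leI])
qed

lemma borel_measurable_emeasure_superlevel[measurable]:
  fixes h :: "'a::euclidean_space \<Rightarrow> ennreal"
  assumes [measurable]: "h \<in> borel_measurable lebesgue"
  shows "(\<lambda>a::real. emeasure lebesgue {x. ennreal a < h x}) \<in> borel_measurable borel"
proof (rule borel_measurable_antimono_ennreal, rule antimonoI)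
  fix a b :: real assume "a \<le> b"
  then show "emeasure lebesgue {x. ennreal b < h x} \<le> emeasure lebesgue {x. ennreal a < h x}"
    by (intro emeasure_mono sets_lebesgue_Collect) (auto intro: le_less_trans[OF ennreal_leI], measurable)
qed

lemma pos_superlevel_measure_le_decr_rearr:
  fixes h :: "'a::euclidean_space \<Rightarrow> ennreal" and \<psi> :: "'a \<Rightarrow> real"
  assumes [measurable]: "h \<in> borel_measurable lebesgue" "\<psi> \<in> borel_measurable lebesgue"
    and "\<And>x. h x \<le> ennreal \<bar>\<psi> x\<bar>"
  shows "pos_superlevel_measure (\<lambda>a. emeasure lebesgue {x. ennreal a < h x}) s \<le> decr_rearr \<psi> s"
  unfolding decr_rearr_def
proof (rule Inf_greatest)
  fix c assume c: "c \<in> {c. emeasure lebesgue {x. c < ennreal \<bar>\<psi> x\<bar>} \<le> ennreal s}"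
  have "{a. 0 < a \<and> ennreal s < emeasure lebesgue {x. ennreal a < h x}} \<subseteq> {a. 0 < a \<and> ennreal a < c}"
  proof (intro subsetI CollectI conjI)
    fix a assume a: "a \<in> {a. 0 < a \<and> ennreal s < emeasure lebesgue {x. ennreal a < h x}}"
    then show "0 < a" by simp
    show "ennreal a < c"
    proof (rule ccontr)
      assume "\<not> ennreal a < c"
      then have "{x. ennreal a < h x} \<subseteq> {x. c < ennreal \<bar>\<psi> x\<bar>}"
        using assms(3) by (auto simp: not_less intro: order.strict_trans2 order.strict_trans1)
      then have "emeasure lebesgue {x. ennreal a < h x} \<le> emeasure lebesgue {x. c < ennreal \<bar>\<psi> x\<bar>}"
        by (intro emeasure_mono sets_lebesgue_Collect) measurable
      then show False using a c by auto
    qed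
  qed
  then have "pos_superlevel_measure (\<lambda>a. emeasure lebesgue {x. ennreal a < h x}) s
      \<le> emeasure lborel {a. 0 < a \<and> ennreal a < c}"
    unfolding pos_superlevel_measure_def by (intro emeasure_mono) auto
  then show "pos_superlevel_measure (\<lambda>a. emeasure lebesgue {x. ennreal a < h x}) s \<le> c"
    by (simp add: emeasure_lborel_below_ennreal)
qed

lemma pos_superlevel_measure_restrict_le:
  fixes \<mu> :: "'a::euclidean_space \<Rightarrow> real"
  assumes [measurable]: "\<mu> \<in> borel_measurable lebesgue" "W \<in> sets lebesgue"
  shows "indicator {0<..} s *
      pos_superlevel_measure (\<lambda>a. emeasure lebesgue {x. ennreal a < indicator W x * ennreal (\<mu> x)}) s
    \<le> indicator {s. 0 < s \<and> ennreal s < emeasure lebesgue W} s * decr_rearr \<mu> s"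
proof (cases "ennreal s < emeasure lebesgue W")
  case True
  have "indicator W x * ennreal (\<mu> x) \<le> ennreal \<bar>\<mu> x\<bar>" for x
    by (auto intro: ennreal_leI split: split_indicator)
  then show ?thesis
    using True pos_superlevel_measure_le_decr_rearr[of "\<lambda>x. indicator W x * ennreal (\<mu> x)" \<mu> s]
    by (auto split: split_indicator)
next
  case False
  have "emeasure lebesgue {x. ennreal a < indicator W x * ennreal (\<mu> x)} \<le> emeasure lebesgue W" for a
    by (rule emeasure_mono) (auto simp: indicator_def)
  then have empty: "{a. 0 < a \<and> ennreal s < emeasure lebesgue {x. ennreal a < indicator W x * ennreal (\<mu> x)}} = {}"
    using False by (auto dest: order.strict_trans2)
  show ?thesis
    unfolding pos_superlevel_measure_def empty by simp
qed

lemma nn_integral_levels_swap: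
  fixes h \<alpha> :: "real \<Rightarrow> ennreal"
  assumes [measurable]: "h \<in> borel_measurable borel" "\<alpha> \<in> borel_measurable borel"
  shows "(\<integral>\<^sup>+a. indicator {0<..} a * (\<integral>\<^sup>+s. indicator {s. 0 < s \<and> ennreal s < \<alpha> a} s * h s \<partial>lborel) \<partial>lborel)
    = (\<integral>\<^sup>+s. (indicator {0<..} s * pos_superlevel_measure \<alpha> s) * h s \<partial>lborel)"
proof -
  have "(\<integral>\<^sup>+a. indicator {0<..} a * (\<integral>\<^sup>+s. indicator {s. 0 < s \<and> ennreal s < \<alpha> a} s * h s \<partial>lborel) \<partial>lborel)
     = (\<integral>\<^sup>+a. \<integral>\<^sup>+s. indicator {a. 0 < a \<and> ennreal s < \<alpha> a} a * (indicator {0<..} s * h s) \<partial>lborel \<partial>lborel)"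
    by (intro nn_integral_cong, subst nn_integral_cmult[symmetric])
      (auto intro!: nn_integral_cong simp: indicator_def)
  also have "\<dots> = (\<integral>\<^sup>+s. \<integral>\<^sup>+a. indicator {a. 0 < a \<and> ennreal s < \<alpha> a} a * (indicator {0<..} s * h s) \<partial>lborel \<partial>lborel)"
    by (rule lborel_pair.Fubini') measurable
  also have "\<dots> = (\<integral>\<^sup>+s. (indicator {0<..} s * pos_superlevel_measure \<alpha> s) * h s \<partial>lborel)"
    unfolding pos_superlevel_measure_def
    by (intro nn_integral_cong, subst nn_integral_multc) (measurable, simp add: mult_ac)
  finally show ?thesis .
qed

lemma nn_integral_indicator_kernel_layer_cake:
  fixes g :: "'a::euclidean_space \<Rightarrow> ennreal" and \<psi> :: "'a \<Rightarrow> real"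
  assumes [measurable]: "g \<in> borel_measurable lebesgue" "\<psi> \<in> borel_measurable borel" "A \<in> sets lebesgue"
  shows "(\<integral>\<^sup>+x. indicator A x * (\<integral>\<^sup>+y. g y * ennreal \<bar>\<psi> (y - x)\<bar> \<partial>lebesgue) \<partial>lebesgue)
    = (\<integral>\<^sup>+b. indicator {0<..} b * cross_integral \<psi> A {y. ennreal b < g y} \<partial>lborel)"
proof -
  define J where "J x b = (\<integral>\<^sup>+y. indicator {y. ennreal b < g y} y * ennreal \<bar>\<psi> (y - x)\<bar> \<partial>lebesgue)"
    for x and b :: real
  have [measurable]: "case_prod J \<in> borel_measurable (lebesgue \<Otimes>\<^sub>M lborel)"
    unfolding J_def by measurable
  have inner: "(\<integral>\<^sup>+y. g y * ennreal \<bar>\<psi> (y - x)\<bar> \<partial>lebesgue) = (\<integral>\<^sup>+b. indicator {0<..} b * J x b \<partial>lborel)" for x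
    unfolding J_def by (rule nn_integral_layer_cake) (rule lebesgue.sigma_finite_measure_axioms, measurable)
  have "(\<integral>\<^sup>+x. indicator A x * (\<integral>\<^sup>+y. g y * ennreal \<bar>\<psi> (y - x)\<bar> \<partial>lebesgue) \<partial>lebesgue)
     = (\<integral>\<^sup>+x. \<integral>\<^sup>+b. indicator A x * (indicator {0<..} b * J x b) \<partial>lborel \<partial>lebesgue)"
    unfolding inner by (intro nn_integral_cong) (simp add: nn_integral_cmult)
  also have "\<dots> = (\<integral>\<^sup>+b. \<integral>\<^sup>+x. indicator A x * (indicator {0<..} b * J x b) \<partial>lebesgue \<partial>lborel)"
    by (rule lebesgue_lborel.Fubini'[symmetric]) measurable
  also have "\<dots> = (\<integral>\<^sup>+b. indicator {0<..} b * cross_integral \<psi> A {y. ennreal b < g y} \<partial>lborel)"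
    unfolding cross_integral_def J_def
    by (intro nn_integral_cong) (simp add: nn_integral_cmult[symmetric] mult_ac)
  finally show ?thesis .
qed

lemma nn_integral_kernel_layer_cake:
  fixes f g :: "'a::euclidean_space \<Rightarrow> ennreal" and \<psi> :: "'a \<Rightarrow> real"
  assumes [measurable]: "f \<in> borel_measurable lebesgue" "g \<in> borel_measurable lebesgue"
    "\<psi> \<in> borel_measurable borel"
  shows "(\<integral>\<^sup>+x. f x * (\<integral>\<^sup>+y. g y * ennreal \<bar>\<psi> (y - x)\<bar> \<partial>lebesgue) \<partial>lebesgue)
    = (\<integral>\<^sup>+a. indicator {0<..} a * (\<integral>\<^sup>+b. indicator {0<..} b *
         cross_integral \<psi> {x. ennreal a < f x} {y. ennreal b < g y} \<partial>lborel) \<partial>lborel)"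
proof -
  have "(\<integral>\<^sup>+x. f x * (\<integral>\<^sup>+y. g y * ennreal \<bar>\<psi> (y - x)\<bar> \<partial>lebesgue) \<partial>lebesgue)
      = (\<integral>\<^sup>+a. indicator {0<..} a * (\<integral>\<^sup>+x. indicator {x. ennreal a < f x} x *
           (\<integral>\<^sup>+y. g y * ennreal \<bar>\<psi> (y - x)\<bar> \<partial>lebesgue) \<partial>lebesgue) \<partial>lborel)"
    by (rule nn_integral_layer_cake) (rule lebesgue.sigma_finite_measure_axioms, measurable)
  also have "\<dots> = (\<integral>\<^sup>+a. indicator {0<..} a * (\<integral>\<^sup>+b. indicator {0<..} b *
         cross_integral \<psi> {x. ennreal a < f x} {y. ennreal b < g y} \<partial>lborel) \<partial>lborel)"
    by (intro nn_integral_cong arg_cong2[where f="(*)"] refl nn_integral_indicator_kernel_layer_cake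
        sets_lebesgue_Collect) measurable
  finally show ?thesis .
qed

lemma nn_integral_rearr_bound_levels_right:
  fixes \<beta> :: "real \<Rightarrow> ennreal"
  assumes [measurable]: "\<beta> \<in> borel_measurable borel"
  shows "(\<integral>\<^sup>+b. indicator {0<..} b * rearr_bound \<psi> \<alpha> (\<beta> b) \<partial>lborel)
    = (\<integral>\<^sup>+s. indicator {s. 0 < s \<and> ennreal s < \<alpha>} s *
         (\<integral>\<^sup>+t. (indicator {0<..} t * pos_superlevel_measure \<beta> t) * max_fn \<psi> (max t s) \<partial>lborel) \<partial>lborel)"
proof -
  let ?T = "\<lambda>s b. \<integral>\<^sup>+t. indicator {t. 0 < t \<and> ennreal t < \<beta> b} t * max_fn \<psi> (max t s) \<partial>lborel"
  have "(\<integral>\<^sup>+b. indicator {0<..} b * rearr_bound \<psi> \<alpha> (\<beta> b) \<partial>lborel)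
     = (\<integral>\<^sup>+b. \<integral>\<^sup>+s. indicator {0<..} b * (indicator {s. 0 < s \<and> ennreal s < \<alpha>} s * ?T s b) \<partial>lborel \<partial>lborel)"
    unfolding rearr_bound_def by (intro nn_integral_cong) (simp add: nn_integral_cmult)
  also have "\<dots> = (\<integral>\<^sup>+s. \<integral>\<^sup>+b. indicator {0<..} b * (indicator {s. 0 < s \<and> ennreal s < \<alpha>} s * ?T s b) \<partial>lborel \<partial>lborel)"
    by (rule lborel_pair.Fubini') measurable
  also have "\<dots> = (\<integral>\<^sup>+s. indicator {s. 0 < s \<and> ennreal s < \<alpha>} s * (\<integral>\<^sup>+b. indicator {0<..} b * ?T s b \<partial>lborel) \<partial>lborel)"
  proof (intro nn_integral_cong)
    fix s :: real
    have "(\<lambda>b. indicator {0<..} b * ?T s b) \<in> borel_measurable lborel"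
      by measurable
    from nn_integral_cmult[OF this, of "indicator {s. 0 < s \<and> ennreal s < \<alpha>} s"]
    show "(\<integral>\<^sup>+b. indicator {0<..} b * (indicator {s. 0 < s \<and> ennreal s < \<alpha>} s * ?T s b) \<partial>lborel)
        = indicator {s. 0 < s \<and> ennreal s < \<alpha>} s * (\<integral>\<^sup>+b. indicator {0<..} b * ?T s b \<partial>lborel)"
      by (simp add: mult_ac)
  qed
  also have "\<dots> = (\<integral>\<^sup>+s. indicator {s. 0 < s \<and> ennreal s < \<alpha>} s *
         (\<integral>\<^sup>+t. (indicator {0<..} t * pos_superlevel_measure \<beta> t) * max_fn \<psi> (max t s) \<partial>lborel) \<partial>lborel)"
    by (intro nn_integral_cong arg_cong2[where f="(*)"] refl nn_integral_levels_swap) measurable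
  finally show ?thesis .
qed

lemma nn_integral_rearr_bound_levels:
  fixes \<alpha> \<beta> :: "real \<Rightarrow> ennreal"
  assumes [measurable]: "\<alpha> \<in> borel_measurable borel" "\<beta> \<in> borel_measurable borel"
  shows "(\<integral>\<^sup>+a. indicator {0<..} a * (\<integral>\<^sup>+b. indicator {0<..} b * rearr_bound \<psi> (\<alpha> a) (\<beta> b) \<partial>lborel) \<partial>lborel)
    = (\<integral>\<^sup>+s. (indicator {0<..} s * pos_superlevel_measure \<alpha> s) *
         (\<integral>\<^sup>+t. (indicator {0<..} t * pos_superlevel_measure \<beta> t) * max_fn \<psi> (max t s) \<partial>lborel) \<partial>lborel)"
  unfolding nn_integral_rearr_bound_levels_right[OF assms(2)]
  by (rule nn_integral_levels_swap) measurable

lemma nn_integral_kernel_le_rearrangement: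
  fixes \<mu> \<nu> \<psi> :: "'a::euclidean_space \<Rightarrow> real"
  assumes [measurable]: "\<mu> \<in> borel_measurable lebesgue" "\<nu> \<in> borel_measurable lebesgue"
    "\<psi> \<in> borel_measurable borel" "W \<in> sets lebesgue" "E \<in> sets lebesgue"
  shows "(\<integral>\<^sup>+x. indicator W x * ennreal (\<mu> x) *
           (\<integral>\<^sup>+y. indicator E y * ennreal (\<nu> y) * ennreal \<bar>\<psi> (y - x)\<bar> \<partial>lebesgue) \<partial>lebesgue)
    \<le> (\<integral>\<^sup>+ s\<in>{s. 0 < s \<and> ennreal s < emeasure lebesgue W}.
          decr_rearr \<mu> s * (\<integral>\<^sup>+ t\<in>{t. 0 < t \<and> ennreal t < emeasure lebesgue E}.
             decr_rearr \<nu> t * max_fn \<psi> (max t s) \<partial>lborel) \<partial>lborel)"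
proof -
  define f where "f x = indicator W x * ennreal (\<mu> x)" for x
  define g where "g y = indicator E y * ennreal (\<nu> y)" for y
  have [measurable]: "f \<in> borel_measurable lebesgue" "g \<in> borel_measurable lebesgue"
    unfolding f_def g_def by measurable
  define \<alpha> where "\<alpha> a = emeasure lebesgue {x. ennreal a < f x}" for a :: real
  define \<beta> where "\<beta> b = emeasure lebesgue {y. ennreal b < g y}" for b :: real
  have [measurable]: "\<alpha> \<in> borel_measurable borel" "\<beta> \<in> borel_measurable borel"
    unfolding \<alpha>_def \<beta>_def by measurable
  have \<alpha>_le: "indicator {0<..} s * pos_superlevel_measure \<alpha> s
      \<le> indicator {s. 0 < s \<and> ennreal s < emeasure lebesgue W} s * decr_rearr \<mu> s" for s
    unfolding \<alpha>_def f_def by (rule pos_superlevel_measure_restrict_le) measurable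
  have \<beta>_le: "indicator {0<..} t * pos_superlevel_measure \<beta> t
      \<le> indicator {t. 0 < t \<and> ennreal t < emeasure lebesgue E} t * decr_rearr \<nu> t" for t
    unfolding \<beta>_def g_def by (rule pos_superlevel_measure_restrict_le) measurable
  have "(\<integral>\<^sup>+x. f x * (\<integral>\<^sup>+y. g y * ennreal \<bar>\<psi> (y - x)\<bar> \<partial>lebesgue) \<partial>lebesgue)
      = (\<integral>\<^sup>+a. indicator {0<..} a * (\<integral>\<^sup>+b. indicator {0<..} b *
           cross_integral \<psi> {x. ennreal a < f x} {y. ennreal b < g y} \<partial>lborel) \<partial>lborel)"
    by (rule nn_integral_kernel_layer_cake) measurable
  also have "\<dots> \<le> (\<integral>\<^sup>+a. indicator {0<..} a *
      (\<integral>\<^sup>+b. indicator {0<..} b * rearr_bound \<psi> (\<alpha> a) (\<beta> b) \<partial>lborel) \<partial>lborel)"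
    unfolding \<alpha>_def \<beta>_def
    by (intro nn_integral_mono mult_left_mono cross_integral_le_rearr_bound)
      (simp_all add: sets_lebesgue_Collect)
  also have "\<dots> = (\<integral>\<^sup>+s. (indicator {0<..} s * pos_superlevel_measure \<alpha> s) *
         (\<integral>\<^sup>+t. (indicator {0<..} t * pos_superlevel_measure \<beta> t) * max_fn \<psi> (max t s) \<partial>lborel) \<partial>lborel)"
    by (rule nn_integral_rearr_bound_levels) measurable
  also have "\<dots> \<le> (\<integral>\<^sup>+s. (indicator {s. 0 < s \<and> ennreal s < emeasure lebesgue W} s * decr_rearr \<mu> s) *
         (\<integral>\<^sup>+t. (indicator {t. 0 < t \<and> ennreal t < emeasure lebesgue E} t * decr_rearr \<nu> t) *
            max_fn \<psi> (max t s) \<partial>lborel) \<partial>lborel)"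
    by (intro nn_integral_mono mult_mono[OF \<alpha>_le] mult_right_mono[OF \<beta>_le]) simp_all
  finally show ?thesis
    unfolding f_def g_def by (simp add: mult_ac)
qed

subsection \<open>Signed kernels\<close>

lemma borel_measurable_locally_integrable:
  fixes f :: "'a::euclidean_space \<Rightarrow> real"
  assumes "locally_integrable f"
  shows "f \<in> borel_measurable lebesgue"
proof (rule borel_measurable_LIMSEQ_real)
  show "(\<lambda>x. indicator (cball 0 (real n)) x *\<^sub>R f x) \<in> borel_measurable lebesgue" for n
    using assms unfolding locally_integrable_def set_integrable_def by (auto intro: borel_measurable_integrable)
  fix x :: 'a
  obtain N :: nat where N: "norm x \<le> real N" using real_arch_simple by blast
  show "(\<lambda>n. indicator (cball 0 (real n)) x *\<^sub>R f x) \<longlonglongrightarrow> f x"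
  proof (rule tendsto_eventually)
    show "\<forall>\<^sub>F n in sequentially. indicator (cball 0 (real n)) x *\<^sub>R f x = f x"
      unfolding eventually_sequentially
      by (rule exI[of _ N]) (use N in \<open>auto simp: indicator_def\<close>)
  qed
qed

lemma AE_lebesgue_translate:
  fixes K K' :: "'a::euclidean_space \<Rightarrow> real"
  assumes "AE z in lborel. K z = K' z"
  shows "AE y in lebesgue. K (y - x) = K' (y - x)"
proof -
  from assms obtain N where N: "{z \<in> space lborel. K z \<noteq> K' z} \<subseteq> N" "N \<in> null_sets lborel"
    by (rule AE_E) (simp add: null_sets_def)
  have "{y. y - x \<in> N} \<in> null_sets lebesgue"
    using null_sets_translation[OF N(2)] by (rule null_sets_completionI)
  moreover have "{y \<in> space lebesgue. K (y - x) \<noteq> K' (y - x)} \<subseteq> {y. y - x \<in> N}"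
    using N(1) by auto
  ultimately show ?thesis
    by (rule AE_I')
qed

lemma abs_integral_le_nn_integral:
  fixes f :: "'a \<Rightarrow> real"
  shows "ennreal \<bar>integral\<^sup>L M f\<bar> \<le> (\<integral>\<^sup>+x. ennreal \<bar>f x\<bar> \<partial>M)"
proof (cases "integrable M f")
  case True
  then show ?thesis using integral_norm_bound_ennreal[OF True] by simp
next
  case False
  then show ?thesis by (simp add: not_integrable_integral_eq)
qed

lemma abs_set_integral_kernel_le:
  fixes \<mu> \<nu> K K' :: "'a::euclidean_space \<Rightarrow> real"
  assumes \<mu>: "\<And>x. 0 \<le> \<mu> x" and \<nu>: "\<And>y. 0 \<le> \<nu> y" and "AE z in lborel. K z = K' z"
  shows "ennreal \<bar>LINT x:W|lebesgue. \<mu> x * (LINT y:E|lebesgue. \<nu> y * K (y - x))\<bar>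
    \<le> (\<integral>\<^sup>+x. indicator W x * ennreal (\<mu> x) *
           (\<integral>\<^sup>+y. indicator E y * ennreal (\<nu> y) * ennreal \<bar>K' (y - x)\<bar> \<partial>lebesgue) \<partial>lebesgue)"
proof -
  have inner: "ennreal \<bar>LINT y:E|lebesgue. \<nu> y * K (y - x)\<bar>
      \<le> (\<integral>\<^sup>+y. indicator E y * ennreal (\<nu> y) * ennreal \<bar>K' (y - x)\<bar> \<partial>lebesgue)" for x
  proof -
    have "ennreal \<bar>LINT y:E|lebesgue. \<nu> y * K (y - x)\<bar>
        \<le> (\<integral>\<^sup>+y. ennreal \<bar>indicator E y *\<^sub>R (\<nu> y * K (y - x))\<bar> \<partial>lebesgue)"
      unfolding set_lebesgue_integral_def by (rule abs_integral_le_nn_integral)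
    also have "\<dots> = (\<integral>\<^sup>+y. indicator E y * ennreal (\<nu> y) * ennreal \<bar>K' (y - x)\<bar> \<partial>lebesgue)"
      using AE_lebesgue_translate[OF assms(3), of x]
      by (intro nn_integral_cong_AE, eventually_elim)
        (use \<nu> in \<open>auto simp: abs_mult ennreal_mult split: split_indicator\<close>)
    finally show ?thesis .
  qed
  have "ennreal \<bar>LINT x:W|lebesgue. \<mu> x * (LINT y:E|lebesgue. \<nu> y * K (y - x))\<bar>
      \<le> (\<integral>\<^sup>+x. ennreal \<bar>indicator W x *\<^sub>R (\<mu> x * (LINT y:E|lebesgue. \<nu> y * K (y - x)))\<bar> \<partial>lebesgue)"
    unfolding set_lebesgue_integral_def[of lebesgue W] by (rule abs_integral_le_nn_integral)
  also have "\<dots> = (\<integral>\<^sup>+x. indicator W x * ennreal (\<mu> x) *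
      ennreal \<bar>LINT y:E|lebesgue. \<nu> y * K (y - x)\<bar> \<partial>lebesgue)"
    using \<mu> by (intro nn_integral_cong) (auto simp: abs_mult ennreal_mult split: split_indicator)
  also have "\<dots> \<le> (\<integral>\<^sup>+x. indicator W x * ennreal (\<mu> x) *
      (\<integral>\<^sup>+y. indicator E y * ennreal (\<nu> y) * ennreal \<bar>K' (y - x)\<bar> \<partial>lebesgue) \<partial>lebesgue)"
    by (intro nn_integral_mono mult_left_mono inner) simp
  finally show ?thesis .
qed

theorem lemma1:
  fixes \<mu> \<nu> K :: "'a::euclidean_space \<Rightarrow> real" and W E :: "'a set"
  assumes "weight \<mu>" and "weight \<nu>" and "locally_integrable K"
    and "W \<in> sets lebesgue" and "E \<in> sets lebesgue"
  shows "ennreal \<bar>LINT x:W|lebesgue. \<mu> x * (LINT y:E|lebesgue. \<nu> y * K (y - x))\<bar>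
    \<le> (\<integral>\<^sup>+ s\<in>{s. 0 < s \<and> ennreal s < emeasure lebesgue W}.
          decr_rearr \<mu> s * (\<integral>\<^sup>+ t\<in>{t. 0 < t \<and> ennreal t < emeasure lebesgue E}.
             decr_rearr \<nu> t * max_fn K (max t s) \<partial>lborel) \<partial>lborel)"
proof -
  have nonneg: "0 \<le> \<mu> x" "0 \<le> \<nu> x" for x
    using assms(1,2) unfolding weight_def by auto
  have \<mu>\<nu>: "\<mu> \<in> borel_measurable lebesgue" "\<nu> \<in> borel_measurable lebesgue"
    using assms(1,2) unfolding weight_def by (auto intro: borel_measurable_locally_integrable)
  have K: "K \<in> borel_measurable lebesgue"
    using assms(3) by (rule borel_measurable_locally_integrable)
  \<comment> \<open>only a Borel representative of \<open>K\<close> makes \<open>(x, y) \<mapsto> K (y - x)\<close> product measurable\<close>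
  obtain K' where K': "K' \<in> borel_measurable lborel" and AE: "AE z in lborel. K z = K' z"
    using completion_ex_borel_measurable_real[of K lborel] K by auto
  have "max_fn K = max_fn K'"
    using decr_rearr_cong_AE[OF AE K measurable_completion[OF K']]
    unfolding max_fn_def[abs_def] by simp
  moreover have "K' \<in> borel_measurable borel"
    using K' by simp
  ultimately show ?thesis
    using order_trans[OF abs_set_integral_kernel_le[OF nonneg AE]
        nn_integral_kernel_le_rearrangement[OF \<mu>\<nu> _ assms(4,5)]]
    by simp
qed

end
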